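(* Let $T\ge1$, $K_0=\{x_0\}$, $K_1,\dots,K_T\subseteq\mathbb R$ closed with $\mathrm{card}(K_{t+1})\ge\mathrm{card}(K_t)$ for $t=0,\dots,T-1$, $\Omega=K_0\times\dots\times K_T$. Let $\mathcal E_t\subseteq C_t$ be vector subspaces with $X_t\in\mathcal E_t$ and $\mathcal E_t+\mathbb R=\mathcal E_t$, and $\mathcal E=\mathcal E_0\times\dots\times\mathcal E_T$. If $\varphi,\psi\in\mathcal E$ and $\Delta\in\mathcal H$ satisfy $\sum_{t=0}^T\varphi_t=\sum_{t=0}^T\psi_t+I^\Delta$ on $\Omega$, then there exist constants $k_0,\dots,k_T,h_0,\dots,h_T\in\mathbb R$ with $\psi_t(x_t)=\varphi_t(x_t)+k_tx_t+h_t$ for all $x_t\in K_t$, $t=0,\dots,T$. In particular, if $S_t:\mathcal E_t\to\mathbb R$ ($t=0,\dots,T$) are stock additive, then $\sum_tS_t(\varphi_t)=\sum_tS_t(\psi_t)$, and on $\mathcal V=\mathcal E_0+\dots+\mathcal E_T+\mathcal I$ the map $v=\sum_t\varphi_t+I^\Delta\mapsto S(v):=\sum_tS_t(\varphi_t)$ is well defined, cash additive and integral additive.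
   Context: $X_t(x_t)=x_t$. $C_t$: continuous $\phi:K_t\to\mathbb R$ with $\sup|\phi(x_t)|/(1+|x_t|)<\infty$, regarded as functions on $\Omega$. $\mathcal H$: $\Delta=(\Delta_0,\dots,\Delta_{T-1})$ with $\Delta_t$ bounded continuous on $K_0\times\dots\times K_t$; $I^\Delta(x)=\sum_{t=0}^{T-1}\Delta_t(x_0,\dots,x_t)(x_{t+1}-x_t)$; $\mathcal I=\{I^\Delta:\Delta\in\mathcal H\}$. $p_t:\mathcal E_t\to\mathbb R$ is stock additive if $p_t(0)=0$ and $p_t(\varphi_t+\alpha X_t+\beta)=p_t(\varphi_t)+\alpha x_0+\beta$ for all $\varphi_t\in\mathcal E_t$, $\alpha,\beta\in\mathbb R$. $S$ is cash additive if $S(v+k)=S(v)+k$ for $k\in\mathbb R$, and integral additive if $S(v+I^\Delta)=S(v)$ for all $\Delta\in\mathcal H$. *)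

theory Defs
  imports "HOL-Analysis.Analysis" "HOL-Library.Equipollence"
begin

text \<open>Functions on K_t are represented extensionally (value undefined outside K_t).\<close>

definition Cspace :: "real set \<Rightarrow> (real \<Rightarrow> real) set" where
  "Cspace A = {\<phi>. \<phi> \<in> extensional A \<and> continuous_on A \<phi> \<and>
                   (\<exists>c. \<forall>x\<in>A. \<bar>\<phi> x\<bar> \<le> c * (1 + \<bar>x\<bar>))}"

definition Xfun :: "real set \<Rightarrow> real \<Rightarrow> real" where
  "Xfun A = (\<lambda>x\<in>A. x)"

definition constfun :: "real set \<Rightarrow> real \<Rightarrow> real \<Rightarrow> real" where
  "constfun A c = (\<lambda>x\<in>A. c)"

definition is_subspace_on :: "real set \<Rightarrow> (real \<Rightarrow> real) set \<Rightarrow> bool" where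
  "is_subspace_on A E \<longleftrightarrow> constfun A 0 \<in> E \<and>
     (\<forall>\<phi>\<in>E. \<forall>\<psi>\<in>E. (\<lambda>x\<in>A. \<phi> x + \<psi> x) \<in> E) \<and>
     (\<forall>\<phi>\<in>E. \<forall>a::real. (\<lambda>x\<in>A. a * \<phi> x) \<in> E)"

definition admissible_space :: "real set \<Rightarrow> (real \<Rightarrow> real) set \<Rightarrow> bool" where
  "admissible_space A E \<longleftrightarrow> E \<subseteq> Cspace A \<and> is_subspace_on A E \<and> Xfun A \<in> E \<and>
     (\<forall>\<phi>\<in>E. \<forall>c::real. (\<lambda>x\<in>A. \<phi> x + c) \<in> E)"

definition Omega :: "nat \<Rightarrow> (nat \<Rightarrow> real set) \<Rightarrow> (nat \<Rightarrow> real) set" where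
  "Omega T K = PiE {..T} K"

text \<open>Trading strategies: \<Delta> t is a bounded continuous function on K_0 x ... x K_t
  (product topology), applied to the restricted path (x_0,...,x_t).\<close>
definition Hstrat :: "nat \<Rightarrow> (nat \<Rightarrow> real set) \<Rightarrow> (nat \<Rightarrow> (nat \<Rightarrow> real) \<Rightarrow> real) set" where
  "Hstrat T K = {\<Delta>. \<forall>t<T. continuous_on (PiE {..t} K) (\<Delta> t) \<and> bounded (\<Delta> t ` PiE {..t} K)}"

definition Iint :: "nat \<Rightarrow> (nat \<Rightarrow> (nat \<Rightarrow> real) \<Rightarrow> real) \<Rightarrow> (nat \<Rightarrow> real) \<Rightarrow> real" where
  "Iint T \<Delta> x = (\<Sum>t<T. \<Delta> t (restrict x {..t}) * (x (Suc t) - x t))"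

definition stock_additive ::
  "real set \<Rightarrow> real \<Rightarrow> (real \<Rightarrow> real) set \<Rightarrow> ((real \<Rightarrow> real) \<Rightarrow> real) \<Rightarrow> bool" where
  "stock_additive A x0 E p \<longleftrightarrow> p (constfun A 0) = 0 \<and>
     (\<forall>\<phi>\<in>E. \<forall>\<alpha> \<beta>::real. p (\<lambda>x\<in>A. \<phi> x + \<alpha> * x + \<beta>) = p \<phi> + \<alpha> * x0 + \<beta>)"

definition Vspace :: "nat \<Rightarrow> (nat \<Rightarrow> real set) \<Rightarrow> (nat \<Rightarrow> (real \<Rightarrow> real) set) \<Rightarrow> ((nat \<Rightarrow> real) \<Rightarrow> real) set" where
  "Vspace T K E = {v. \<exists>\<phi> \<Delta>. (\<forall>t\<le>T. \<phi> t \<in> E t) \<and> \<Delta> \<in> Hstrat T K \<and>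
       v = (\<lambda>x\<in>Omega T K. (\<Sum>t\<le>T. \<phi> t (x t)) + Iint T \<Delta> x)}"

end

theory Submission
  imports Defs
begin

(* Fix a path up to time T and vary only its last coordinate y in K_(T+1): the identity
   sum_t phi_t = sum_t psi_t + I^Delta says that (phi - psi)_(T+1)(y) = Delta_T(x_0..x_T) y + const.
   If K_(T+1) has two points this forces Delta_T to be one constant a on all paths; otherwise
   the cardinality condition makes every K_t a singleton, so there is just one path.  Either way
   the last difference is affine, a y + b, and shifting a x_T + b to time T gives the same kind
   of identity with horizon T.  By induction psi_t = phi_t + k_t x + h_t with sum k_t = 0
   (the slopes telescope) and sum h_t = 0, and stock additivity yields
   sum S_t(psi_t) = sum S_t(phi_t) + x_0 sum k_t + sum h_t = sum S_t(phi_t).  Hence S is well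
   defined on V; cash and integral additivity follow by absorbing the constant into phi_0 and
   the integral into Delta. *)

lemma lepoll_chain:
  assumes "\<forall>t<n. A t \<lesssim> A (Suc t)" and "s \<le> r" and "r \<le> n"
  shows "A s \<lesssim> A r"
  using assms(2)
proof (induction rule: dec_induct)
  case (step m)
  then have "A m \<lesssim> A (Suc m)"
    using assms(1,3) by simp
  with step.IH show ?case
    by (rule lepoll_trans)
qed simp

lemma sum_replace_summand:
  fixes g :: "'a \<Rightarrow> 'b::ab_group_add"
  assumes "finite A" and "x \<in> A"
  shows "(\<Sum>t\<in>A. if t = x then v else g t) = sum g A - g x + v"
  by (simp add: sum.If_cases assms sum.remove[OF assms] Diff_eq)

lemma Iint_fun_upd_Suc:
  assumes "p \<in> extensional {..T}"
  shows "Iint (Suc T) \<Delta> (p(Suc T := y)) = Iint T \<Delta> p + \<Delta> T p * (y - p T)"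
proof -
  have prefix: "restrict (p(Suc T := y)) {..t} = restrict p {..t}" if "t \<le> T" for t
    using that by (auto simp: restrict_def)
  have "restrict p {..T} = p"
    using assms by (simp add: extensional_restrict)
  with prefix show ?thesis
    by (simp add: Iint_def)
qed

lemma sum_eq_Iint_Suc_split:
  assumes "\<forall>x\<in>PiE {..Suc T} K. (\<Sum>t\<le>Suc T. f t (x t)) = Iint (Suc T) \<Delta> x"
    and p: "p \<in> PiE {..T} K" and y: "y \<in> K (Suc T)"
  shows "((\<Sum>t\<le>T. f t (p t)) - Iint T \<Delta> p) + f (Suc T) y = \<Delta> T p * (y - p T)"
proof -
  have "p(Suc T := y) \<in> PiE {..Suc T} K"
    using PiE_fun_upd[OF y p] by (simp add: atMost_Suc)
  with assms(1) have "(\<Sum>t\<le>Suc T. f t ((p(Suc T := y)) t)) = Iint (Suc T) \<Delta> (p(Suc T := y))"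
    by blast
  then show ?thesis
    using p Iint_fun_upd_Suc[of p T \<Delta> y] by (simp add: PiE_iff)
qed

lemma strategy_const_on_paths:
  fixes K :: "nat \<Rightarrow> real set"
  assumes card: "\<forall>t<Suc T. K t \<lesssim> K (Suc t)"
    and split: "\<forall>p\<in>PiE {..T} K. \<forall>y\<in>K (Suc T). g p + f y = D p * (y - p T)"
  obtains a where "\<forall>p\<in>PiE {..T} K. D p = a"
proof (cases "\<exists>c\<in>K (Suc T). \<exists>d\<in>K (Suc T). c \<noteq> d")
  case True
  then obtain c d where cd: "c \<in> K (Suc T)" "d \<in> K (Suc T)" "c \<noteq> d" by blast
  have "D p = (f c - f d) / (c - d)" if "p \<in> PiE {..T} K" for p
  proof -
    have "g p + f c = D p * (c - p T)" "g p + f d = D p * (d - p T)"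
      using split that cd(1,2) by auto
    then have "f c - f d = D p * (c - d)"
      by (simp add: algebra_simps)
    with cd(3) show ?thesis by simp
  qed
  with that show ?thesis by blast
next
  case False
  have subsingleton: "\<exists>z. K t \<subseteq> {z}" if "t \<le> T" for t
  proof -
    have "K t \<lesssim> K (Suc T)"
      using lepoll_chain[OF card] that by simp
    also have "K (Suc T) \<lesssim> {()}"
      unfolding subset_singleton_iff_lepoll[symmetric] using False by blast
    finally show ?thesis
      by (simp only: subset_singleton_iff_lepoll)
  qed
  have "p = q" if "p \<in> PiE {..T} K" "q \<in> PiE {..T} K" for p q
  proof (rule PiE_ext[OF that])
    fix i assume "i \<in> {..T}"
    then show "p i = q i"
      using that subsingleton[of i] by (auto simp: PiE_iff)
  qed
  with that show ?thesis by blast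
qed

lemma sum_eq_Iint_imp_affine:
  fixes K :: "nat \<Rightarrow> real set" and f :: "nat \<Rightarrow> real \<Rightarrow> real"
  assumes "\<forall>t\<le>T. K t \<noteq> {}" and "\<forall>t<T. K t \<lesssim> K (Suc t)"
    and "\<forall>x\<in>PiE {..T} K. (\<Sum>t\<le>T. f t (x t)) = Iint T \<Delta> x"
  shows "\<exists>k h. (\<forall>t\<le>T. \<forall>y\<in>K t. f t y = k t * y + h t)
    \<and> (\<Sum>t\<le>T. k t) = 0 \<and> (\<Sum>t\<le>T. h t) = 0"
  using assms
proof (induction T arbitrary: f)
  case 0
  have "f 0 y = 0" if "y \<in> K 0" for y
  proof -
    have "(\<lambda>t\<in>{..0}. y) \<in> PiE {..0} K"
      using that by simp
    from bspec[OF "0.prems"(3) this] show ?thesis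
      by (simp add: Iint_def)
  qed
  then show ?case
    by (intro exI[of _ "\<lambda>_. 0"]) auto
next
  case (Suc T)
  note nonempty = Suc.prems(1) and card = Suc.prems(2)
  have split: "\<forall>p\<in>PiE {..T} K. \<forall>y\<in>K (Suc T).
      ((\<Sum>t\<le>T. f t (p t)) - Iint T \<Delta> p) + f (Suc T) y = \<Delta> T p * (y - p T)"
    using sum_eq_Iint_Suc_split[OF Suc.prems(3)] by blast
  obtain a where a: "\<forall>p\<in>PiE {..T} K. \<Delta> T p = a"
    using strategy_const_on_paths[OF card split] by blast
  obtain p0 where p0: "p0 \<in> PiE {..T} K"
    using nonempty by (force simp: PiE_eq_empty_iff)
  obtain y0 where y0: "y0 \<in> K (Suc T)"
    using nonempty by blast
  have split_a: "(\<Sum>t\<le>T. f t (p t)) - Iint T \<Delta> p + f (Suc T) y = a * (y - p T)"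
    if "p \<in> PiE {..T} K" "y \<in> K (Suc T)" for p y
    using split a that by simp
  define b where "b = f (Suc T) y0 - a * y0"
  have last: "f (Suc T) y = a * y + b" if "y \<in> K (Suc T)" for y
    using split_a[OF p0 that] split_a[OF p0 y0] by (simp add: b_def algebra_simps)
  define f' where "f' = f(T := (\<lambda>y. f T y + a * y + b))"
  have "\<forall>p\<in>PiE {..T} K. (\<Sum>t\<le>T. f' t (p t)) = Iint T \<Delta> p"
  proof
    fix p assume p: "p \<in> PiE {..T} K"
    have "(\<Sum>t\<le>T. f' t (p t)) = (\<Sum>t\<le>T. if t = T then f T (p T) + a * p T + b else f t (p t))"
      by (rule sum.cong) (auto simp: f'_def)
    also have "\<dots> = (\<Sum>t\<le>T. f t (p t)) + (a * p T + b)"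
      by (simp add: sum_replace_summand)
    also have "\<dots> = Iint T \<Delta> p"
      using split_a[OF p y0] last[OF y0] by (simp add: algebra_simps)
    finally show "(\<Sum>t\<le>T. f' t (p t)) = Iint T \<Delta> p" .
  qed
  with Suc.IH[of f'] nonempty card obtain k h
    where kh: "\<forall>t\<le>T. \<forall>y\<in>K t. f' t y = k t * y + h t"
      and sums: "(\<Sum>t\<le>T. k t) = 0" "(\<Sum>t\<le>T. h t) = 0"
    by auto
  show ?case
  proof (intro exI conjI)
    show "\<forall>t\<le>Suc T. \<forall>y\<in>K t. f t y = (k(T := k T - a, Suc T := a)) t * y + (h(T := h T - b, Suc T := b)) t"
      using kh last by (auto simp: f'_def le_Suc_eq algebra_simps)
    show "(\<Sum>t\<le>Suc T. (k(T := k T - a, Suc T := a)) t) = 0"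
      using sums by (simp add: sum_replace_summand)
    show "(\<Sum>t\<le>Suc T. (h(T := h T - b, Suc T := b)) t) = 0"
      using sums by (simp add: sum_replace_summand)
  qed
qed

lemma nonempty_of_lepoll_chain:
  assumes "K 0 \<noteq> {}" and "\<forall>t<T. K t \<lesssim> K (Suc t)"
  shows "\<forall>t\<le>T. K t \<noteq> {}"
proof (intro allI impI notI)
  fix t assume "t \<le> T" and "K t = {}"
  moreover have "K 0 \<lesssim> K t"
    using lepoll_chain[OF assms(2)] \<open>t \<le> T\<close> by simp
  ultimately show False
    using assms(1) by simp
qed

lemma affine_difference:
  fixes \<phi> \<psi> :: "nat \<Rightarrow> real \<Rightarrow> real"
  assumes "\<forall>t\<le>T. K t \<noteq> {}" and "\<forall>t<T. K t \<lesssim> K (Suc t)"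
    and "\<forall>x\<in>Omega T K. (\<Sum>t\<le>T. \<phi> t (x t)) = (\<Sum>t\<le>T. \<psi> t (x t)) + Iint T \<Delta> x"
  shows "\<exists>k h. (\<forall>t\<le>T. \<forall>y\<in>K t. \<psi> t y = \<phi> t y + k t * y + h t)
    \<and> (\<Sum>t\<le>T. k t) = 0 \<and> (\<Sum>t\<le>T. h t) = 0"
proof -
  have "\<forall>x\<in>PiE {..T} K. (\<Sum>t\<le>T. \<psi> t (x t) - \<phi> t (x t)) = Iint T (\<lambda>t p. - \<Delta> t p) x"
    using assms(3) by (simp add: Omega_def Iint_def sum_subtractf sum_negf)
  from sum_eq_Iint_imp_affine[where f = "\<lambda>t y. \<psi> t y - \<phi> t y", OF assms(1,2) this]
  show ?thesis
    by (simp add: algebra_simps)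
qed

lemma stock_additive_affine:
  assumes "stock_additive A x0 E p" and "\<phi> \<in> E" and "\<psi> \<in> extensional A"
    and "\<forall>y\<in>A. \<psi> y = \<phi> y + \<alpha> * y + \<beta>"
  shows "p \<psi> = p \<phi> + \<alpha> * x0 + \<beta>"
proof -
  have "\<psi> = (\<lambda>y\<in>A. \<phi> y + \<alpha> * y + \<beta>)"
    by (rule extensionalityI[OF assms(3)]) (simp_all add: assms(4))
  with assms(1,2) show ?thesis
    by (simp add: stock_additive_def)
qed

lemma sum_stock_additive_eq:
  assumes "\<forall>t\<le>T. stock_additive (K t) x0 (E t) (S t)"
    and "\<forall>t\<le>T. \<phi> t \<in> E t" and "\<forall>t\<le>T. \<psi> t \<in> extensional (K t)"
    and "\<forall>t\<le>T. \<forall>y\<in>K t. \<psi> t y = \<phi> t y + k t * y + h t"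
    and "(\<Sum>t\<le>T. k t) = 0" and "(\<Sum>t\<le>T. h t) = 0"
  shows "(\<Sum>t\<le>T. S t (\<psi> t)) = (\<Sum>t\<le>T. S t (\<phi> t))"
proof -
  have "(\<Sum>t\<le>T. S t (\<psi> t)) = (\<Sum>t\<le>T. S t (\<phi> t) + (k t * x0 + h t))"
  proof (rule sum.cong)
    fix t assume "t \<in> {..T}"
    then show "S t (\<psi> t) = S t (\<phi> t) + (k t * x0 + h t)"
      using stock_additive_affine[of "K t" x0 "E t" "S t" "\<phi> t" "\<psi> t" "k t" "h t"] assms(1-4)
      by simp
  qed simp
  also have "\<dots> = (\<Sum>t\<le>T. S t (\<phi> t)) + (\<Sum>t\<le>T. k t) * x0 + (\<Sum>t\<le>T. h t)"
    by (simp add: sum.distrib sum_distrib_right)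
  finally show ?thesis
    using assms(5,6) by simp
qed

lemma Iint_add: "Iint T (\<lambda>t p. \<Delta>1 t p + \<Delta>2 t p) x = Iint T \<Delta>1 x + Iint T \<Delta>2 x"
  unfolding Iint_def by (simp add: sum.distrib distrib_right)

lemma Iint_diff: "Iint T (\<lambda>t p. \<Delta>1 t p - \<Delta>2 t p) x = Iint T \<Delta>1 x - Iint T \<Delta>2 x"
  unfolding Iint_def by (simp add: sum_subtractf left_diff_distrib)

lemma Hstrat_add:
  assumes "\<Delta>1 \<in> Hstrat T K" and "\<Delta>2 \<in> Hstrat T K"
  shows "(\<lambda>t p. \<Delta>1 t p + \<Delta>2 t p) \<in> Hstrat T K"
  using assms unfolding Hstrat_def by (blast intro: continuous_on_add bounded_plus_comp)

lemma admissible_space_extensional: "admissible_space A E \<Longrightarrow> E \<subseteq> extensional A"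
  by (auto simp: admissible_space_def Cspace_def)

definition payoff :: "nat \<Rightarrow> (nat \<Rightarrow> real set) \<Rightarrow> (nat \<Rightarrow> real \<Rightarrow> real)
    \<Rightarrow> (nat \<Rightarrow> (nat \<Rightarrow> real) \<Rightarrow> real) \<Rightarrow> (nat \<Rightarrow> real) \<Rightarrow> real" where
  "payoff T K \<phi> \<Delta> = (\<lambda>x\<in>Omega T K. (\<Sum>t\<le>T. \<phi> t (x t)) + Iint T \<Delta> x)"

definition price :: "nat \<Rightarrow> (nat \<Rightarrow> real set) \<Rightarrow> (nat \<Rightarrow> (real \<Rightarrow> real) set)
    \<Rightarrow> (nat \<Rightarrow> (real \<Rightarrow> real) \<Rightarrow> real) \<Rightarrow> ((nat \<Rightarrow> real) \<Rightarrow> real) \<Rightarrow> real" where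
  "price T K E S v = (SOME r. \<exists>\<phi> \<Delta>. (\<forall>t\<le>T. \<phi> t \<in> E t) \<and> \<Delta> \<in> Hstrat T K \<and>
     v = payoff T K \<phi> \<Delta> \<and> r = (\<Sum>t\<le>T. S t (\<phi> t)))"

lemma Vspace_eq: "Vspace T K E = {payoff T K \<phi> \<Delta> | \<phi> \<Delta>. (\<forall>t\<le>T. \<phi> t \<in> E t) \<and> \<Delta> \<in> Hstrat T K}"
  by (auto simp: Vspace_def payoff_def)

lemma price_payoff:
  assumes ne: "\<forall>t\<le>T. K t \<noteq> {}" and card: "\<forall>t<T. K t \<lesssim> K (Suc t)"
    and ext: "\<forall>t\<le>T. E t \<subseteq> extensional (K t)"
    and SA: "\<forall>t\<le>T. stock_additive (K t) x0 (E t) (S t)"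
    and \<phi>E: "\<forall>t\<le>T. \<phi> t \<in> E t" and \<Delta>H: "\<Delta> \<in> Hstrat T K"
  shows "price T K E S (payoff T K \<phi> \<Delta>) = (\<Sum>t\<le>T. S t (\<phi> t))"
proof -
  have "\<exists>\<phi>' \<Delta>'. (\<forall>t\<le>T. \<phi>' t \<in> E t) \<and> \<Delta>' \<in> Hstrat T K \<and>
      payoff T K \<phi> \<Delta> = payoff T K \<phi>' \<Delta>' \<and> price T K E S (payoff T K \<phi> \<Delta>) = (\<Sum>t\<le>T. S t (\<phi>' t))"
    unfolding price_def by (rule someI_ex) (use \<phi>E \<Delta>H in blast)
  then obtain \<phi>' \<Delta>' where \<phi>'E: "\<forall>t\<le>T. \<phi>' t \<in> E t"
    and same: "payoff T K \<phi> \<Delta> = payoff T K \<phi>' \<Delta>'"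
    and price: "price T K E S (payoff T K \<phi> \<Delta>) = (\<Sum>t\<le>T. S t (\<phi>' t))"
    by blast
  have "\<forall>x\<in>Omega T K. (\<Sum>t\<le>T. \<phi>' t (x t)) = (\<Sum>t\<le>T. \<phi> t (x t)) + Iint T (\<lambda>t p. \<Delta> t p - \<Delta>' t p) x"
  proof
    fix x assume "x \<in> Omega T K"
    with fun_cong[OF same, of x] show "(\<Sum>t\<le>T. \<phi>' t (x t)) = (\<Sum>t\<le>T. \<phi> t (x t)) + Iint T (\<lambda>t p. \<Delta> t p - \<Delta>' t p) x"
      by (simp add: payoff_def Iint_diff)
  qed
  then obtain k h where "\<forall>t\<le>T. \<forall>y\<in>K t. \<phi> t y = \<phi>' t y + k t * y + h t"
    and "(\<Sum>t\<le>T. k t) = 0" and "(\<Sum>t\<le>T. h t) = 0"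
    using affine_difference[OF ne card] by blast
  moreover have "\<forall>t\<le>T. \<phi> t \<in> extensional (K t)"
    using ext \<phi>E by blast
  ultimately have "(\<Sum>t\<le>T. S t (\<phi> t)) = (\<Sum>t\<le>T. S t (\<phi>' t))"
    by (intro sum_stock_additive_eq[OF SA \<phi>'E])
  with price show ?thesis
    by simp
qed

lemma price_add_const:
  assumes ne: "\<forall>t\<le>T. K t \<noteq> {}" and card: "\<forall>t<T. K t \<lesssim> K (Suc t)"
    and adm: "\<forall>t\<le>T. admissible_space (K t) (E t)"
    and SA: "\<forall>t\<le>T. stock_additive (K t) x0 (E t) (S t)"
    and v: "v \<in> Vspace T K E"
  shows "price T K E S (\<lambda>x\<in>Omega T K. v x + c) = price T K E S v + c"
proof -
  obtain \<phi> \<Delta> where \<phi>E: "\<forall>t\<le>T. \<phi> t \<in> E t" and \<Delta>H: "\<Delta> \<in> Hstrat T K"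
    and v_eq: "v = payoff T K \<phi> \<Delta>"
    using v by (auto simp: Vspace_eq)
  have ext: "\<forall>t\<le>T. E t \<subseteq> extensional (K t)"
    using adm admissible_space_extensional by blast
  define \<phi>c where "\<phi>c = \<phi>(0 := (\<lambda>y\<in>K 0. \<phi> 0 y + c))"
  have \<phi>cE: "\<forall>t\<le>T. \<phi>c t \<in> E t"
    using adm \<phi>E by (auto simp: \<phi>c_def admissible_space_def)
  have "(\<lambda>x\<in>Omega T K. v x + c) = payoff T K \<phi>c \<Delta>"
    unfolding payoff_def
  proof (rule restrict_ext)
    fix x assume x: "x \<in> Omega T K"
    then have "(\<Sum>t\<le>T. \<phi>c t (x t)) = (\<Sum>t\<le>T. if t = 0 then \<phi> 0 (x 0) + c else \<phi> t (x t))"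
      by (intro sum.cong) (auto simp: \<phi>c_def Omega_def)
    with x show "v x + c = (\<Sum>t\<le>T. \<phi>c t (x t)) + Iint T \<Delta> x"
      by (simp add: v_eq payoff_def sum_replace_summand)
  qed
  moreover have "S 0 (\<phi>c 0) = S 0 (\<phi> 0) + c"
    using stock_additive_affine[of "K 0" x0 "E 0" "S 0" "\<phi> 0" "\<phi>c 0" 0 c] SA \<phi>E
    by (simp add: \<phi>c_def)
  then have "(\<Sum>t\<le>T. S t (\<phi>c t)) = (\<Sum>t\<le>T. if t = 0 then S 0 (\<phi> 0) + c else S t (\<phi> t))"
    by (intro sum.cong) (auto simp: \<phi>c_def)
  ultimately show ?thesis
    using price_payoff[OF ne card ext SA \<phi>cE \<Delta>H] price_payoff[OF ne card ext SA \<phi>E \<Delta>H]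
    by (simp add: v_eq sum_replace_summand)
qed

lemma price_add_Iint:
  assumes ne: "\<forall>t\<le>T. K t \<noteq> {}" and card: "\<forall>t<T. K t \<lesssim> K (Suc t)"
    and ext: "\<forall>t\<le>T. E t \<subseteq> extensional (K t)"
    and SA: "\<forall>t\<le>T. stock_additive (K t) x0 (E t) (S t)"
    and v: "v \<in> Vspace T K E" and \<Delta>'H: "\<Delta>' \<in> Hstrat T K"
  shows "price T K E S (\<lambda>x\<in>Omega T K. v x + Iint T \<Delta>' x) = price T K E S v"
proof -
  obtain \<phi> \<Delta> where \<phi>E: "\<forall>t\<le>T. \<phi> t \<in> E t" and \<Delta>H: "\<Delta> \<in> Hstrat T K"
    and v_eq: "v = payoff T K \<phi> \<Delta>"
    using v by (auto simp: Vspace_eq)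
  have "(\<lambda>x\<in>Omega T K. v x + Iint T \<Delta>' x) = payoff T K \<phi> (\<lambda>t p. \<Delta> t p + \<Delta>' t p)"
    by (auto simp: v_eq payoff_def Iint_add)
  then show ?thesis
    using price_payoff[OF ne card ext SA \<phi>E Hstrat_add[OF \<Delta>H \<Delta>'H]] price_payoff[OF ne card ext SA \<phi>E \<Delta>H]
    by (simp add: v_eq)
qed

theorem lemmaA2:
  fixes T :: nat and x0 :: real and K :: "nat \<Rightarrow> real set"
    and E :: "nat \<Rightarrow> (real \<Rightarrow> real) set"
    and \<phi> \<psi> :: "nat \<Rightarrow> real \<Rightarrow> real"
    and \<Delta> :: "nat \<Rightarrow> (nat \<Rightarrow> real) \<Rightarrow> real"
  assumes T1: "T \<ge> 1"
    and K0: "K 0 = {x0}"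
    and Kclosed: "\<forall>t\<in>{1..T}. closed (K t)"
    and Kcard: "\<forall>t<T. K t \<lesssim> K (Suc t)"
    and Eadm: "\<forall>t\<le>T. admissible_space (K t) (E t)"
    and \<phi>E: "\<forall>t\<le>T. \<phi> t \<in> E t"
    and \<psi>E: "\<forall>t\<le>T. \<psi> t \<in> E t"
    and \<Delta>H: "\<Delta> \<in> Hstrat T K"
    and eq: "\<forall>x\<in>Omega T K. (\<Sum>t\<le>T. \<phi> t (x t)) = (\<Sum>t\<le>T. \<psi> t (x t)) + Iint T \<Delta> x"
  shows "(\<exists>k h :: nat \<Rightarrow> real. \<forall>t\<le>T. \<forall>y\<in>K t. \<psi> t y = \<phi> t y + k t * y + h t)
    \<and> (\<forall>S :: nat \<Rightarrow> (real \<Rightarrow> real) \<Rightarrow> real.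
          (\<forall>t\<le>T. stock_additive (K t) x0 (E t) (S t)) \<longrightarrow>
          (\<Sum>t\<le>T. S t (\<phi> t)) = (\<Sum>t\<le>T. S t (\<psi> t))
          \<and> (\<exists>SV :: ((nat \<Rightarrow> real) \<Rightarrow> real) \<Rightarrow> real.
               (\<forall>\<phi>' \<Delta>'. (\<forall>t\<le>T. \<phi>' t \<in> E t) \<and> \<Delta>' \<in> Hstrat T K \<longrightarrow>
                  SV (\<lambda>x\<in>Omega T K. (\<Sum>t\<le>T. \<phi>' t (x t)) + Iint T \<Delta>' x) = (\<Sum>t\<le>T. S t (\<phi>' t)))
             \<and> (\<forall>v\<in>Vspace T K E. \<forall>c::real. SV (\<lambda>x\<in>Omega T K. v x + c) = SV v + c)
             \<and> (\<forall>v\<in>Vspace T K E. \<forall>\<Delta>'\<in>Hstrat T K. SV (\<lambda>x\<in>Omega T K. v x + Iint T \<Delta>' x) = SV v)))"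
proof -
  have ne: "\<forall>t\<le>T. K t \<noteq> {}"
    using nonempty_of_lepoll_chain[OF _ Kcard] K0 by simp
  have ext: "\<forall>t\<le>T. E t \<subseteq> extensional (K t)"
    using Eadm admissible_space_extensional by blast
  have \<psi>ext: "\<forall>t\<le>T. \<psi> t \<in> extensional (K t)"
    using \<psi>E ext by blast
  obtain k h where affine: "\<forall>t\<le>T. \<forall>y\<in>K t. \<psi> t y = \<phi> t y + k t * y + h t"
    and sums: "(\<Sum>t\<le>T. k t) = 0" "(\<Sum>t\<le>T. h t) = 0"
    using affine_difference[OF ne Kcard eq] by blast
  show ?thesis
  proof (intro conjI allI impI)
    fix S assume SA: "\<forall>t\<le>T. stock_additive (K t) x0 (E t) (S t)"
    show "(\<Sum>t\<le>T. S t (\<phi> t)) = (\<Sum>t\<le>T. S t (\<psi> t))"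
      using sum_stock_additive_eq[OF SA \<phi>E \<psi>ext affine sums] by simp
    show "\<exists>SV. (\<forall>\<phi>' \<Delta>'. (\<forall>t\<le>T. \<phi>' t \<in> E t) \<and> \<Delta>' \<in> Hstrat T K \<longrightarrow>
                  SV (\<lambda>x\<in>Omega T K. (\<Sum>t\<le>T. \<phi>' t (x t)) + Iint T \<Delta>' x) = (\<Sum>t\<le>T. S t (\<phi>' t)))
             \<and> (\<forall>v\<in>Vspace T K E. \<forall>c. SV (\<lambda>x\<in>Omega T K. v x + c) = SV v + c)
             \<and> (\<forall>v\<in>Vspace T K E. \<forall>\<Delta>'\<in>Hstrat T K. SV (\<lambda>x\<in>Omega T K. v x + Iint T \<Delta>' x) = SV v)"
      using price_payoff[OF ne Kcard ext SA] price_add_const[OF ne Kcard Eadm SA]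
        price_add_Iint[OF ne Kcard ext SA]
      by (intro exI[of _ "price T K E S"]) (simp add: payoff_def)
  qed (use affine in blast)
qed

end
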